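(* Let $\alpha\in(0,1)$ and $R>0$. A target moves with position $(0,y_T(t))$, $\dot y_T=1$, and an observer with position $(x_O(t),y_O(t))$, $\dot x_O=\alpha\cos\psi$, $\dot y_O=\alpha\sin\psi$. Suppose at time $t_2$ the target lies on the boundary of the observer's disk of radius $R$ with relative bearing $\lambda\in[-\pi,\pi]$, i.e. $\big(x_O(t_2),y_O(t_2)-y_T(t_2)\big)=R(\sin\lambda,\cos\lambda)$, and that for $t\ge t_2$ the observer uses the constant heading $\psi\equiv\cos^{-1}\!\left(\frac{(\alpha^2-1)\sin\lambda}{\alpha^2+2\alpha\cos\lambda+1}\right)$. Then for every $t$ with $t_2<t<t_2+\frac{2R(\alpha+\cos\lambda)}{1-\alpha^2}$ one has $x_O(t)^2+(y_O(t)-y_T(t))^2<R^2$; i.e. the target remains strictly inside the observation disk until the escape time $t_f=t_2+\frac{2R(\alpha+\cos\lambda)}{1-\alpha^2}$.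
   Context: The observation disk is the closed disk of radius $R$ centered at the observer; the target escapes when its distance to the observer exceeds $R$. Headings are measured counterclockwise from the positive $x$-axis. *)

theory Defs
  imports "HOL-Analysis.Analysis"
begin

end

theory Submission
  imports Defs
begin

text \<open>Relative to the target, the observer starts at \<open>R (sin \<lambda>, cos \<lambda>)\<close> and, with the
  constant heading, moves with the constant velocity \<open>-((1 - \<alpha>\<^sup>2)/D) (\<alpha> sin \<lambda>, 1 + \<alpha> cos \<lambda>)\<close>,
  where \<open>D = \<alpha>\<^sup>2 + 2\<alpha> cos \<lambda> + 1\<close>. The squared distance is therefore a quadratic in the elapsed
  time \<open>\<tau>\<close> equal to \<open>R\<^sup>2\<close> at \<open>\<tau> = 0\<close> and at \<open>\<tau> = 2R(\<alpha> + cos \<lambda>)/(1 - \<alpha>\<^sup>2)\<close>, with positive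
  leading coefficient, so it is below \<open>R\<^sup>2\<close> strictly between these two roots.\<close>

lemma constant_derivative_affine:
  fixes f :: "real \<Rightarrow> real"
  assumes "a \<le> b" and "\<And>x. a \<le> x \<Longrightarrow> x \<le> b \<Longrightarrow> (f has_real_derivative k) (at x)"
  shows "f b = f a + (b - a) * k"
proof (cases "a = b")
  case False
  with assms MVT2[of a b f "\<lambda>_. k"] show ?thesis by force
qed simp

lemma heading_denominator_pos:
  fixes \<alpha> c :: real
  assumes "0 \<le> \<alpha>" "\<alpha> < 1" "-1 \<le> c"
  shows "0 < \<alpha>\<^sup>2 + 2 * \<alpha> * c + 1"
proof -
  have "0 \<le> 2 * \<alpha> * (1 + c)" using assms by simp
  then have "(1 - \<alpha>)\<^sup>2 \<le> \<alpha>\<^sup>2 + 2 * \<alpha> * c + 1"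
    by (simp add: power2_eq_square algebra_simps)
  moreover have "0 < (1 - \<alpha>)\<^sup>2" using assms by simp
  ultimately show ?thesis by linarith
qed

lemma arccos_heading_velocity:
  fixes \<alpha> s c :: real
  assumes \<alpha>: "0 < \<alpha>" "\<alpha> < 1" and sc: "s\<^sup>2 + c\<^sup>2 = 1" and front: "0 < \<alpha> + c"
  defines "D \<equiv> \<alpha>\<^sup>2 + 2 * \<alpha> * c + 1"
  shows "\<alpha> * cos (arccos ((\<alpha>\<^sup>2 - 1) * s / D)) = - ((1 - \<alpha>\<^sup>2) / D) * (\<alpha> * s)"
    and "\<alpha> * sin (arccos ((\<alpha>\<^sup>2 - 1) * s / D)) - 1 = - ((1 - \<alpha>\<^sup>2) / D) * (1 + \<alpha> * c)"
proof -
  define k where "k = (\<alpha>\<^sup>2 - 1) * s / D"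
  define S where "S = 2 * \<alpha> + (1 + \<alpha>\<^sup>2) * c"
  have "c\<^sup>2 \<le> 1"
    using sc zero_le_power2[of s] by linarith
  then have c1: "-1 \<le> c"
    by (simp add: abs_square_le_1 abs_le_iff)
  have D: "0 < D"
    unfolding D_def using \<alpha> c1 by (intro heading_denominator_pos) auto
  have S: "0 < S"
  proof -
    have "(1 + \<alpha>\<^sup>2) * (- \<alpha>) < (1 + \<alpha>\<^sup>2) * c"
      using front by (intro mult_strict_left_mono) (auto simp: add_pos_nonneg)
    moreover have "\<alpha> * \<alpha>\<^sup>2 < \<alpha>"
      using \<alpha> by (simp add: power_less_one_iff abs_square_less_1)
    ultimately show ?thesis
      unfolding S_def by (simp add: algebra_simps power2_eq_square)
  qed
  \<comment> \<open>\<open>(k, S/D)\<close> is a unit vector, and \<open>S > 0\<close> makes it the one \<open>arccos\<close> selects.\<close>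
  have s2: "s\<^sup>2 = 1 - c\<^sup>2" using sc by simp
  have "((\<alpha>\<^sup>2 - 1) * s)\<^sup>2 + S\<^sup>2 = D\<^sup>2"
    unfolding D_def S_def power_mult_distrib s2 by (simp add: algebra_simps power2_eq_square)
  then have unit: "k\<^sup>2 + (S / D)\<^sup>2 = 1"
    unfolding k_def power_divide add_divide_distrib[symmetric] using D by simp
  then have "k\<^sup>2 \<le> 1"
    using zero_le_power2[of "S / D"] by linarith
  then have "cos (arccos k) = k"
    by (simp add: abs_square_le_1 abs_le_iff)
  moreover have "\<alpha> * k = - ((1 - \<alpha>\<^sup>2) / D) * (\<alpha> * s)"
    unfolding k_def using D by (simp add: field_simps)
  ultimately show "\<alpha> * cos (arccos ((\<alpha>\<^sup>2 - 1) * s / D)) = - ((1 - \<alpha>\<^sup>2) / D) * (\<alpha> * s)"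
    unfolding k_def[symmetric] by simp
  have "1 - k\<^sup>2 = (S / D)\<^sup>2" using unit by simp
  then have "sin (arccos k) = S / D"
    using \<open>k\<^sup>2 \<le> 1\<close> S D by (simp add: sin_arccos_abs abs_square_le_1)
  moreover have "\<alpha> * (S / D) - 1 = - ((1 - \<alpha>\<^sup>2) / D) * (1 + \<alpha> * c)"
  proof -
    have "\<alpha> * (S / D) - 1 = (\<alpha> * S - D) / D"
      using D by (simp add: diff_divide_distrib)
    also have "\<alpha> * S - D = - (1 - \<alpha>\<^sup>2) * (1 + \<alpha> * c)"
      unfolding S_def D_def by (simp add: algebra_simps power2_eq_square)
    finally show ?thesis by (simp add: minus_divide_left algebra_simps)
  qed
  ultimately show "\<alpha> * sin (arccos ((\<alpha>\<^sup>2 - 1) * s / D)) - 1 = - ((1 - \<alpha>\<^sup>2) / D) * (1 + \<alpha> * c)"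
    unfolding k_def[symmetric] by simp
qed

lemma distance_along_relative_track_less:
  fixes \<alpha> R s c \<mu> \<tau> :: real
  assumes sc: "s\<^sup>2 + c\<^sup>2 = 1" and pos: "0 < \<mu>" "0 < \<tau>"
    and before: "\<tau> * \<mu> * (\<alpha>\<^sup>2 + 2 * \<alpha> * c + 1) < 2 * R * (\<alpha> + c)"
  shows "(R * s - \<tau> * \<mu> * (\<alpha> * s))\<^sup>2 + (R * c - \<tau> * \<mu> * (1 + \<alpha> * c))\<^sup>2 < R\<^sup>2"
proof -
  have "(R * s - \<tau> * \<mu> * (\<alpha> * s))\<^sup>2 + (R * c - \<tau> * \<mu> * (1 + \<alpha> * c))\<^sup>2
      = R\<^sup>2 * (s\<^sup>2 + c\<^sup>2) - \<tau> * \<mu> * (2 * R * (\<alpha> * (s\<^sup>2 + c\<^sup>2) + c)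
          - \<tau> * \<mu> * (\<alpha>\<^sup>2 * (s\<^sup>2 + c\<^sup>2) + 2 * \<alpha> * c + 1))"
    by (simp add: algebra_simps power2_eq_square)
  also have "\<dots> = R\<^sup>2 - \<tau> * \<mu> * (2 * R * (\<alpha> + c) - \<tau> * \<mu> * (\<alpha>\<^sup>2 + 2 * \<alpha> * c + 1))"
    unfolding sc by (simp add: algebra_simps)
  finally have expand: "(R * s - \<tau> * \<mu> * (\<alpha> * s))\<^sup>2 + (R * c - \<tau> * \<mu> * (1 + \<alpha> * c))\<^sup>2
      = R\<^sup>2 - \<tau> * \<mu> * (2 * R * (\<alpha> + c) - \<tau> * \<mu> * (\<alpha>\<^sup>2 + 2 * \<alpha> * c + 1))" .
  have "0 < \<tau> * \<mu> * (2 * R * (\<alpha> + c) - \<tau> * \<mu> * (\<alpha>\<^sup>2 + 2 * \<alpha> * c + 1))"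
    using pos before by simp
  then show ?thesis unfolding expand by linarith
qed

theorem lemma2:
  fixes \<alpha> R lam t2 :: real
    and xO yO yT psi :: "real \<Rightarrow> real"
  assumes alpha: "0 < \<alpha>" "\<alpha> < 1"
    and R: "0 < R"
    and lam_range: "-pi \<le> lam" "lam \<le> pi"
    and dT: "\<And>t. (yT has_real_derivative 1) (at t)"
    and dx: "\<And>t. (xO has_real_derivative \<alpha> * cos (psi t)) (at t)"
    and dy: "\<And>t. (yO has_real_derivative \<alpha> * sin (psi t)) (at t)"
    and init: "xO t2 = R * sin lam" "yO t2 - yT t2 = R * cos lam"
    and heading: "\<And>t. t \<ge> t2 \<Longrightarrow>
        psi t = arccos ((\<alpha>^2 - 1) * sin lam / (\<alpha>^2 + 2 * \<alpha> * cos lam + 1))"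
  shows "\<forall>t. t2 < t \<and> t < t2 + 2 * R * (\<alpha> + cos lam) / (1 - \<alpha>^2) \<longrightarrow>
           (xO t)^2 + (yO t - yT t)^2 < R^2"
proof (intro allI impI)
  fix t assume t: "t2 < t \<and> t < t2 + 2 * R * (\<alpha> + cos lam) / (1 - \<alpha>^2)"
  define \<tau> where "\<tau> = t - t2"
  define D where "D = \<alpha>\<^sup>2 + 2 * \<alpha> * cos lam + 1"
  define \<psi> where "\<psi> = arccos ((\<alpha>\<^sup>2 - 1) * sin lam / D)"
  define \<mu> where "\<mu> = (1 - \<alpha>\<^sup>2) / D"
  have "0 < 1 - \<alpha>\<^sup>2" using alpha by (simp add: power_less_one_iff abs_square_less_1)
  have \<tau>: "0 < \<tau>" "\<tau> * (1 - \<alpha>\<^sup>2) < 2 * R * (\<alpha> + cos lam)"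
    using t \<open>0 < 1 - \<alpha>\<^sup>2\<close> by (auto simp: \<tau>_def field_simps)
  \<comment> \<open>The time window is nonempty only if \<open>\<alpha> + cos lam > 0\<close>, which is exactly what fixes the
    sign of \<open>sin \<psi>\<close> below.\<close>
  then have "0 < 2 * R * (\<alpha> + cos lam)"
    using \<open>0 < 1 - \<alpha>\<^sup>2\<close> by (smt (verit) mult_pos_pos)
  then have front: "0 < \<alpha> + cos lam"
    using R by (simp add: zero_less_mult_iff)
  have D: "0 < D"
    unfolding D_def using alpha by (intro heading_denominator_pos) auto
  have \<psi>: "\<And>u. t2 \<le> u \<Longrightarrow> psi u = \<psi>"
    using heading by (simp add: \<psi>_def D_def)
  have "xO t = xO t2 + \<tau> * (\<alpha> * cos \<psi>)"
    unfolding \<tau>_def using t dx \<psi> by (intro constant_derivative_affine) auto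
  also have "\<dots> = R * sin lam - \<tau> * \<mu> * (\<alpha> * sin lam)"
    using init arccos_heading_velocity(1)[OF alpha _ front] by (simp add: \<psi>_def \<mu>_def D_def)
  finally have x: "xO t = R * sin lam - \<tau> * \<mu> * (\<alpha> * sin lam)" .
  have "yO t = yO t2 + \<tau> * (\<alpha> * sin \<psi>)" "yT t = yT t2 + \<tau> * 1"
    unfolding \<tau>_def using t dy dT \<psi> by (intro constant_derivative_affine; auto)+
  then have "yO t - yT t = R * cos lam + \<tau> * (\<alpha> * sin \<psi> - 1)"
    using init by (simp add: algebra_simps)
  also have "\<dots> = R * cos lam - \<tau> * \<mu> * (1 + \<alpha> * cos lam)"
    using arccos_heading_velocity(2)[OF alpha _ front] by (simp add: \<psi>_def \<mu>_def D_def)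
  finally have y: "yO t - yT t = R * cos lam - \<tau> * \<mu> * (1 + \<alpha> * cos lam)" .
  have "\<tau> * \<mu> * D < 2 * R * (\<alpha> + cos lam)"
    using \<tau> D by (simp add: \<mu>_def)
  moreover have "0 < \<mu>" using D \<open>0 < 1 - \<alpha>\<^sup>2\<close> by (simp add: \<mu>_def)
  ultimately show "(xO t)\<^sup>2 + (yO t - yT t)\<^sup>2 < R\<^sup>2"
    unfolding x y D_def using \<tau>(1) by (intro distance_along_relative_track_less) auto
qed

end
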